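(* Let $p$ be an odd prime, $a,m\in\mathbb Z_p$ with $a\not\equiv0,-1\pmod p$ and $m\not\equiv0\pmod p$, and put $A_k=\binom ak\binom{-1-a}k\binom{2k}k$. Then $$\frac{m-4}2\sum_{k=0}^{p-1}\frac{k^2A_k}{m^k}\equiv\sum_{k=0}^{p-1}\frac{kA_k}{m^k}-2a(a+1)\sum_{k=0}^{p-1}\frac{A_k}{m^k}+a(a+1)\sum_{k=0}^{p-2}\frac{A_k}{m^k(k+1)}\pmod{p^3},$$ $$\frac{m-4}2\sum_{k=0}^{p-1}\frac{k^3A_k}{m^k}\equiv3\sum_{k=0}^{p-1}\frac{k^2A_k}{m^k}-(2a(a+1)-1)\sum_{k=0}^{p-1}\frac{kA_k}{m^k}-a(a+1)\sum_{k=0}^{p-1}\frac{A_k}{m^k}\pmod{p^3}.$$ Consequently, if moreover $m\not\equiv 4\pmod p$, then $$\sum_{k=0}^{p-1}\frac{k^3A_k}{m^k}\equiv\frac{(2-4a(a+1))(m-4)+12}{(m-4)^2}\sum_{k=0}^{p-1}\frac{kA_k}{m^k}-\frac{2a(a+1)(m+8)}{(m-4)^2}\sum_{k=0}^{p-1}\frac{A_k}{m^k}+\frac{12a(a+1)}{(m-4)^2}\sum_{k=0}^{p-2}\frac{A_k}{m^k(k+1)}\pmod{p^3}.$$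
   Context: $\mathbb Z_p$ denotes the set of rational numbers whose denominator is not divisible by $p$; for $u,v\in\mathbb Z_p$, $u\equiv v\pmod{p^r}$ means $(u-v)/p^r\in\mathbb Z_p$. For $a$ rational, $\binom a0=1$ and $\binom ak=\frac{a(a-1)\cdots(a-k+1)}{k!}$ for $k\ge1$. *)

theory Defs
  imports Complex_Main "HOL-Computational_Algebra.Primes"
begin

definition p_integral :: "nat \<Rightarrow> rat \<Rightarrow> bool" where
  "p_integral p x \<longleftrightarrow> \<not> (int p dvd snd (quotient_of x))"

definition qcong :: "nat \<Rightarrow> nat \<Rightarrow> rat \<Rightarrow> rat \<Rightarrow> bool" where
  "qcong p r u v \<longleftrightarrow> p_integral p ((u - v) / (of_nat p) ^ r)"

definition A :: "rat \<Rightarrow> nat \<Rightarrow> rat" where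
  "A a k = (a gchoose k) * ((-1 - a) gchoose k) * of_nat ((2 * k) choose k)"

end

theory Submission
  imports Defs
begin

text \<open>
  The terms satisfy the hypergeometric recurrence
  \<open>(k + 1)\<^sup>3 A(k + 1) = 2 (2k + 1) (k\<^sup>2 + k - a (a + 1)) A(k)\<close>.
  Multiplying a moment sum \<open>\<Sum>k\<^sup>j A(k) / m\<^sup>k\<close> by \<open>m\<close> and shifting the index therefore
  expresses it exactly through lower moments; for the second moment the division by \<open>k + 1\<close>
  produces the extra sum of \<open>A(k) / (m\<^sup>k (k + 1))\<close>. Comparing sums up to \<open>p - 1\<close> with sums
  up to \<open>p - 2\<close>, both congruences hold as exact identities up to a \<open>p\<close>-integral multiple of
  the last term \<open>A(p - 1) / m\<^sup>p\<^sup>-\<^sup>1\<close>. That term vanishes modulo \<open>p\<^sup>3\<close> because each of the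
  three factors of \<open>A(p - 1)\<close> is divisible by \<open>p\<close>: \<open>binom(2p - 2, p - 1)\<close> since
  \<open>p \<le> 2p - 2 < 2p\<close>, and \<open>binom(x, p - 1)\<close> for \<open>x \<in> {a, -1 - a}\<close> since \<open>x \<equiv> j\<close> for some
  \<open>j < p - 1\<close>, so that \<open>x - j\<close> is a factor of the falling factorial.
  The third congruence follows by eliminating the second moment, for which \<open>m - 4\<close> must be a
  unit.
\<close>

lemma p_integral_iff:
  assumes "prime p"
  shows "p_integral p x \<longleftrightarrow> (\<exists>n d. x = of_int n / of_int d \<and> \<not> int p dvd d)"
proof
  assume "p_integral p x"
  then show "\<exists>n d. x = of_int n / of_int d \<and> \<not> int p dvd d"
    unfolding p_integral_def by (metis prod.collapse quotient_of_div)
next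
  assume "\<exists>n d. x = of_int n / of_int d \<and> \<not> int p dvd d"
  then obtain n d where x: "x = of_int n / of_int d" and d: "\<not> int p dvd d" by blast
  obtain n' d' where q: "quotient_of x = (n', d')" by (cases "quotient_of x")
  have "d \<noteq> 0" using d by auto
  with x quotient_of_div[OF q] quotient_of_denom_pos[OF q] have "n' * d = n * d'"
    by (simp add: field_simps flip: of_int_mult of_int_eq_iff)
  then have "d' dvd d"
    using quotient_of_coprime[OF q] by (metis coprime_commute coprime_dvd_mult_right_iff dvd_triv_right)
  with d show "p_integral p x" unfolding p_integral_def q by (auto dest: dvd_trans)
qed

lemma p_integral_of_int:
  assumes "prime p"
  shows "p_integral p (of_int n)"
proof -
  have "\<not> int p dvd 1"
    using prime_gt_1_nat[OF assms] by simp
  then show ?thesis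
    unfolding p_integral_iff[OF assms] by (intro exI[of _ n] exI[of _ 1]) simp
qed

lemma p_integral_add:
  assumes "prime p" "p_integral p x" "p_integral p y"
  shows "p_integral p (x + y)"
proof -
  obtain n d n' d' where x: "x = of_int n / of_int d" and d: "\<not> int p dvd d"
    and y: "y = of_int n' / of_int d'" and d': "\<not> int p dvd d'"
    using assms p_integral_iff by metis
  from d d' have "d \<noteq> 0" "d' \<noteq> 0" by auto
  with x y have "x + y = of_int (n * d' + n' * d) / of_int (d * d')"
    by (simp add: add_frac_eq)
  moreover from d d' assms(1) have "\<not> int p dvd d * d'"
    by (simp add: prime_dvd_mult_iff)
  ultimately show ?thesis
    using assms(1) p_integral_iff by blast
qed

lemma p_integral_mult:
  assumes "prime p" "p_integral p x" "p_integral p y"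
  shows "p_integral p (x * y)"
proof -
  obtain n d n' d' where "x = of_int n / of_int d" and d: "\<not> int p dvd d"
    and "y = of_int n' / of_int d'" and d': "\<not> int p dvd d'"
    using assms p_integral_iff by metis
  then have "x * y = of_int (n * n') / of_int (d * d')"
    by simp
  moreover from d d' assms(1) have "\<not> int p dvd d * d'"
    by (simp add: prime_dvd_mult_iff)
  ultimately show ?thesis
    using assms(1) p_integral_iff by blast
qed

lemma p_integral_of_nat: "prime p \<Longrightarrow> p_integral p (of_nat n)"
  using p_integral_of_int[of p "int n"] by simp

lemma p_integral_numeral: "prime p \<Longrightarrow> p_integral p (numeral n)"
  using p_integral_of_nat[of p "numeral n"] by simp

lemma p_integral_0: "prime p \<Longrightarrow> p_integral p 0"
  and p_integral_1: "prime p \<Longrightarrow> p_integral p 1"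
  using p_integral_of_nat[of p 0] p_integral_of_nat[of p 1] by simp_all

lemma p_integral_minus: "prime p \<Longrightarrow> p_integral p x \<Longrightarrow> p_integral p (- x)"
  using p_integral_mult[of p "-1" x] p_integral_of_int[of p "-1"] by simp

lemma p_integral_diff: "prime p \<Longrightarrow> p_integral p x \<Longrightarrow> p_integral p y \<Longrightarrow> p_integral p (x - y)"
  using p_integral_add[of p x "- y"] p_integral_minus by simp

lemma p_integral_power: "prime p \<Longrightarrow> p_integral p x \<Longrightarrow> p_integral p (x ^ k)"
  by (induction k) (simp_all add: p_integral_1 p_integral_mult)

lemma p_integral_prod:
  "prime p \<Longrightarrow> (\<And>i. i \<in> I \<Longrightarrow> p_integral p (f i)) \<Longrightarrow> p_integral p (\<Prod>i\<in>I. f i)"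
  by (induction I rule: infinite_finite_induct) (simp_all add: p_integral_1 p_integral_mult)

lemmas p_integral_intros =
  p_integral_of_nat p_integral_numeral p_integral_0 p_integral_1
  p_integral_add p_integral_minus p_integral_diff p_integral_mult p_integral_power

lemma p_integral_inverse:
  assumes "prime p" "p_integral p x" "\<not> qcong p 1 x 0"
  shows "p_integral p (inverse x)"
proof -
  obtain n d where x: "x = of_int n / of_int d" and d: "\<not> int p dvd d"
    using assms p_integral_iff by metis
  have "\<not> int p dvd n"
  proof
    assume "int p dvd n"
    then obtain t where "n = int p * t" ..
    with x assms(1) have "(x - 0) / of_nat p ^ 1 = of_int t / of_int d"
      by (simp add: prime_gt_0_nat)
    with assms d show False
      unfolding qcong_def using p_integral_iff by metis
  qed
  with x show ?thesis
    using assms(1) p_integral_iff by (metis inverse_divide)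
qed

lemma p_integral_inverse_of_nat:
  assumes "prime p" "\<not> p dvd n"
  shows "p_integral p (inverse (of_nat n))"
proof -
  have "inverse (of_nat n) = of_int 1 / (of_int (int n) :: rat)"
    by (simp add: inverse_eq_divide)
  with assms show ?thesis
    unfolding p_integral_iff[OF assms(1)] by (metis int_dvd_int_iff)
qed

lemma qcong_diff_iff: "qcong p r (u - v) 0 \<longleftrightarrow> qcong p r u v"
  by (simp add: qcong_def)

lemma qcong_add:
  assumes "prime p" "qcong p r x y" "qcong p r x' y'"
  shows "qcong p r (x + x') (y + y')"
proof -
  have eq: "(x + x' - (y + y')) / of_nat p ^ r = (x - y) / of_nat p ^ r + (x' - y') / of_nat p ^ r"
    by (simp add: diff_divide_distrib add_divide_distrib)
  show ?thesis
    unfolding qcong_def eq by (rule p_integral_add[OF assms(1) assms(2,3)[unfolded qcong_def]])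
qed

lemma qcong_0_mult_left:
  assumes "prime p" "p_integral p c" "qcong p r x 0"
  shows "qcong p r (c * x) 0"
proof -
  have eq: "(c * x - 0) / of_nat p ^ r = c * ((x - 0) / of_nat p ^ r)"
    by simp
  show ?thesis
    unfolding qcong_def eq by (rule p_integral_mult[OF assms(1,2) assms(3)[unfolded qcong_def]])
qed

lemma qcong_0_mult:
  assumes "prime p" "qcong p r x 0" "qcong p s y 0"
  shows "qcong p (r + s) (x * y) 0"
proof -
  have eq: "(x * y - 0) / of_nat p ^ (r + s) = ((x - 0) / of_nat p ^ r) * ((y - 0) / of_nat p ^ s)"
    by (simp add: power_add)
  show ?thesis
    unfolding qcong_def eq by (rule p_integral_mult[OF assms(1) assms(2,3)[unfolded qcong_def]])
qed

lemma qcong_of_nat_0I: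
  assumes "prime p" "p dvd n"
  shows "qcong p 1 (of_nat n) 0"
proof -
  from assms(2) obtain t where "n = p * t" ..
  with prime_gt_0_nat[OF assms(1)] have "(of_nat n - 0) / of_nat p ^ 1 = (of_nat t :: rat)"
    by simp
  with assms(1) show ?thesis
    unfolding qcong_def by (simp add: p_integral_of_nat)
qed

lemma qcong_nat_residue:
  assumes "prime p" "p_integral p a"
  shows "\<exists>j<p. qcong p 1 a (of_nat j)"
proof -
  obtain n d where a: "a = of_int n / of_int d" and d: "\<not> int p dvd d"
    using assms p_integral_iff by metis
  have "coprime (int p) d"
    using assms(1) d by (simp add: prime_imp_coprime_int prime_nat_int_transfer)
  then obtain u v where uv: "u * int p + v * d = 1"
    using bezout_int[of "int p" d] by auto
  define j where "j = nat ((n * v) mod int p)"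
  have p0: "int p > 0"
    using prime_gt_0_nat[OF assms(1)] by simp
  then have j: "int j = n * v - int p * ((n * v) div int p)" "j < p"
    unfolding j_def by (simp_all add: minus_mult_div_eq_mod nat_less_iff)
  define t where "t = n * u + (n * v) div int p * d"
  have "n - int j * d = n * (u * int p + v * d) - int j * d"
    using uv by simp
  also have "\<dots> = int p * t"
    unfolding t_def j(1) by (simp add: algebra_simps)
  finally have t: "n - int j * d = int p * t" .
  from d have "d \<noteq> 0" by auto
  with a have "a - of_nat j = of_int (n - int j * d) / of_int d"
    by (simp add: field_simps)
  with p0 have "(a - of_nat j) / of_nat p ^ 1 = of_int t / of_int d"
    unfolding t by simp
  with j(2) d show ?thesis
    unfolding qcong_def p_integral_iff[OF assms(1)] by blast
qed

lemma gbinomial_qcong_0: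
  assumes "prime p" "p_integral p x" "qcong p 1 x (of_nat j)" "j < k" "k < p"
  shows "qcong p 1 (x gchoose k) 0"
proof -
  have j: "j \<in> {0..<k}"
    using assms(4) by simp
  have "(\<Prod>i=0..<k. x - of_nat i) = (x - of_nat j) * (\<Prod>i\<in>{0..<k} - {j}. x - of_nat i)"
    using prod.remove[OF finite_atLeastLessThan j] .
  then have eq: "((x gchoose k) - 0) / of_nat p ^ 1
      = (x - of_nat j) / of_nat p ^ 1 * (\<Prod>i\<in>{0..<k} - {j}. x - of_nat i) * inverse (fact k)"
    unfolding gbinomial_prod_rev by (simp add: divide_inverse)
  have "p_integral p (\<Prod>i\<in>{0..<k} - {j}. x - of_nat i)"
    using assms(1,2) by (intro p_integral_prod p_integral_intros)
  moreover have "p_integral p (inverse (fact k))"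
    using p_integral_inverse_of_nat[OF assms(1), of "fact k"] assms(1,5)
    by (simp add: prime_dvd_fact_iff)
  ultimately show ?thesis
    unfolding qcong_def eq using assms(1,3)[unfolded qcong_def] by (intro p_integral_mult)
qed

lemma gbinomial_pred_prime_qcong_0:
  assumes "prime p" "p_integral p x" "\<not> qcong p 1 x (- 1)"
  shows "qcong p 1 (x gchoose (p - 1)) 0"
proof -
  obtain j where j: "j < p" "qcong p 1 x (of_nat j)"
    using qcong_nat_residue[OF assms(1,2)] by blast
  have "j \<noteq> p - 1"
  proof
    assume "j = p - 1"
    with prime_gt_0_nat[OF assms(1)] have "(x - - 1) / of_nat p ^ 1 = (x - of_nat j) / of_nat p ^ 1 + 1"
      by (simp add: of_nat_diff field_simps)
    with assms(1,3) j(2) show False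
      unfolding qcong_def by (simp add: p_integral_add p_integral_1)
  qed
  with j assms(1,2) show ?thesis
    by (intro gbinomial_qcong_0[of p x j]) auto
qed

lemma prime_dvd_central_binomial:
  assumes "prime p" "k < p" "p \<le> 2 * k"
  shows "p dvd (2 * k choose k)"
proof -
  have "fact k * fact k * (2 * k choose k) = (fact (2 * k) :: nat)"
    using binomial_fact_lemma[of k "2 * k"] by simp
  moreover have "p dvd fact (2 * k)" "\<not> p dvd fact k"
    using assms by (simp_all add: prime_dvd_fact_iff)
  ultimately show ?thesis
    using prime_dvd_mult_iff[OF assms(1)] by metis
qed

lemma A_pred_prime_qcong_0:
  assumes "prime p" "p_integral p a" "\<not> qcong p 1 a 0" "\<not> qcong p 1 a (- 1)"
  shows "qcong p 3 (A a (p - 1)) 0"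
proof -
  have "(- 1 - a - - 1) / of_nat p ^ 1 = - ((a - 0) / of_nat p ^ 1)"
    by simp
  then have "\<not> qcong p 1 (- 1 - a) (- 1)"
    using assms(3) p_integral_minus[OF assms(1)] unfolding qcong_def by force
  moreover have "p_integral p (- 1 - a)"
    using assms(1,2) by (simp add: p_integral_diff p_integral_minus p_integral_1)
  ultimately have "qcong p 1 ((- 1 - a) gchoose (p - 1)) 0"
    using assms(1) gbinomial_pred_prime_qcong_0 by blast
  moreover have "qcong p 1 (a gchoose (p - 1)) 0"
    using assms gbinomial_pred_prime_qcong_0 by blast
  moreover have "qcong p 1 (of_nat (2 * (p - 1) choose (p - 1))) 0"
    using assms(1) prime_ge_2_nat[OF assms(1)]
    by (intro qcong_of_nat_0I prime_dvd_central_binomial) auto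
  ultimately have "qcong p (1 + 1 + 1)
      ((a gchoose (p - 1)) * ((- 1 - a) gchoose (p - 1)) * of_nat (2 * (p - 1) choose (p - 1))) 0"
    using qcong_0_mult[OF assms(1)] by blast
  then show ?thesis
    unfolding A_def by (simp add: numeral_3_eq_3)
qed

lemma A_pred_prime_div_power_qcong_0:
  assumes "prime p" "p_integral p a" "\<not> qcong p 1 a 0" "\<not> qcong p 1 a (- 1)"
    and "p_integral p m" "\<not> qcong p 1 m 0"
  shows "qcong p 3 (A a (p - 1) / m ^ (p - 1)) 0"
proof -
  have "p_integral p (inverse m ^ (p - 1))"
    using assms(1,5,6) by (intro p_integral_power p_integral_inverse)
  then have "qcong p 3 (inverse m ^ (p - 1) * A a (p - 1)) 0"
    using A_pred_prime_qcong_0[OF assms(1-4)] by (rule qcong_0_mult_left[OF assms(1)])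
  then show ?thesis
    by (simp add: divide_inverse power_inverse mult.commute)
qed

lemma central_binomial_Suc: "Suc k * (2 * Suc k choose Suc k) = 2 * (2 * k + 1) * (2 * k choose k)"
proof -
  have "2 * Suc k choose Suc k = (Suc (2 * k) choose k) + (Suc (2 * k) choose Suc k)"
    by simp
  also have "Suc (2 * k) choose k = Suc (2 * k) choose Suc k"
    using binomial_symmetric[of k "Suc (2 * k)"] by simp
  finally have "Suc k * (2 * Suc k choose Suc k) = 2 * ((Suc (2 * k) choose Suc k) * Suc k)"
    by simp
  also have "\<dots> = 2 * (2 * k + 1) * (2 * k choose k)"
    by (simp only: Suc_times_binomial_eq[symmetric]) simp
  finally show ?thesis .
qed

lemma gbinomial_Suc_mult:
  fixes x :: "'a :: field_char_0"
  shows "of_nat (Suc k) * (x gchoose Suc k) = (x - of_nat k) * (x gchoose k)"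
  using gbinomial_mult_1[of x k] by (simp add: algebra_simps)

lemma A_Suc:
  "(of_nat k + 1) ^ 3 * A a (Suc k)
    = 2 * (2 * of_nat k + 1) * (of_nat k ^ 2 + of_nat k - a * (a + 1)) * A a k"
proof -
  have "(of_nat k + 1) ^ 3 * A a (Suc k)
      = (of_nat (Suc k) * (a gchoose Suc k)) * (of_nat (Suc k) * ((- 1 - a) gchoose Suc k))
        * of_nat (Suc k * (2 * Suc k choose Suc k))"
    unfolding A_def by (simp add: algebra_simps power3_eq_cube)
  also have "\<dots> = ((a - of_nat k) * (a gchoose k)) * ((- 1 - a - of_nat k) * ((- 1 - a) gchoose k))
        * of_nat (2 * (2 * k + 1) * (2 * k choose k))"
    by (simp only: gbinomial_Suc_mult central_binomial_Suc)
  also have "\<dots> = 2 * (2 * of_nat k + 1) * (of_nat k ^ 2 + of_nat k - a * (a + 1)) * A a k"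
    unfolding A_def by (simp add: algebra_simps power2_eq_square)
  finally show ?thesis .
qed

lemma A_Suc_square:
  "(of_nat k + 1) ^ 2 * A a (Suc k)
    = (4 * of_nat k ^ 2 + 2 * of_nat k - 4 * a * (a + 1)) * A a k + 2 * a * (a + 1) * A a k / (of_nat k + 1)"
proof -
  have k: "(of_nat k + 1 :: rat) \<noteq> 0"
    using of_nat_0_le_iff[of k] by linarith
  have "(of_nat k + 1) * ((of_nat k + 1) ^ 2 * A a (Suc k)) = (of_nat k + 1) ^ 3 * A a (Suc k)"
    by (simp add: power2_eq_square power3_eq_cube)
  also have "\<dots> = (of_nat k + 1) * ((4 * of_nat k ^ 2 + 2 * of_nat k - 4 * a * (a + 1)) * A a k
      + 2 * a * (a + 1) * A a k / (of_nat k + 1))"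
    unfolding A_Suc using k by (simp add: field_simps power2_eq_square)
  finally show ?thesis
    using k by simp
qed

lemma sum_shift_div_power:
  fixes m :: "'a :: field"
  assumes "m \<noteq> 0" "F 0 = 0"
  shows "m * (\<Sum>k = 0..Suc n. F k / m ^ k) = (\<Sum>k = 0..n. F (Suc k) / m ^ k)"
  using assms by (simp add: sum.atLeast0_atMost_Suc_shift sum_distrib_left del: sum.cl_ivl_Suc)

lemma third_moment_recurrence:
  fixes a m :: rat
  assumes "m \<noteq> 0"
  shows "m * (\<Sum>k = 0..Suc n. of_nat k ^ 3 * A a k / m ^ k)
    = 4 * (\<Sum>k = 0..n. of_nat k ^ 3 * A a k / m ^ k) + 6 * (\<Sum>k = 0..n. of_nat k ^ 2 * A a k / m ^ k)
      + (2 - 4 * a * (a + 1)) * (\<Sum>k = 0..n. of_nat k * A a k / m ^ k)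
      - 2 * a * (a + 1) * (\<Sum>k = 0..n. A a k / m ^ k)"
proof -
  have "m * (\<Sum>k = 0..Suc n. of_nat k ^ 3 * A a k / m ^ k)
      = (\<Sum>k = 0..n. (of_nat k + 1) ^ 3 * A a (Suc k) / m ^ k)"
    using sum_shift_div_power[OF assms, of "\<lambda>k. of_nat k ^ 3 * A a k"] by (simp add: add.commute)
  also have "\<dots> = (\<Sum>k = 0..n. 4 * (of_nat k ^ 3 * A a k / m ^ k) + 6 * (of_nat k ^ 2 * A a k / m ^ k)
      + (2 - 4 * a * (a + 1)) * (of_nat k * A a k / m ^ k) - 2 * a * (a + 1) * (A a k / m ^ k))"
    unfolding A_Suc by (intro sum.cong) (simp_all add: divide_inverse algebra_simps power2_eq_square power3_eq_cube)
  finally show ?thesis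
    by (simp add: sum.distrib sum_subtractf sum_distrib_left)
qed

lemma second_moment_recurrence:
  fixes a m :: rat
  assumes "m \<noteq> 0"
  shows "m * (\<Sum>k = 0..Suc n. of_nat k ^ 2 * A a k / m ^ k)
    = 4 * (\<Sum>k = 0..n. of_nat k ^ 2 * A a k / m ^ k) + 2 * (\<Sum>k = 0..n. of_nat k * A a k / m ^ k)
      - 4 * a * (a + 1) * (\<Sum>k = 0..n. A a k / m ^ k)
      + 2 * a * (a + 1) * (\<Sum>k = 0..n. A a k / (m ^ k * (of_nat k + 1)))"
proof -
  have "m * (\<Sum>k = 0..Suc n. of_nat k ^ 2 * A a k / m ^ k)
      = (\<Sum>k = 0..n. (of_nat k + 1) ^ 2 * A a (Suc k) / m ^ k)"
    using sum_shift_div_power[OF assms, of "\<lambda>k. of_nat k ^ 2 * A a k"] by (simp add: add.commute)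
  also have "\<dots> = (\<Sum>k = 0..n. 4 * (of_nat k ^ 2 * A a k / m ^ k) + 2 * (of_nat k * A a k / m ^ k)
      - 4 * a * (a + 1) * (A a k / m ^ k) + 2 * a * (a + 1) * (A a k / (m ^ k * (of_nat k + 1))))"
    unfolding A_Suc_square divide_divide_eq_left[symmetric]
    by (intro sum.cong) (simp_all add: divide_inverse algebra_simps)
  finally show ?thesis
    by (simp add: sum.distrib sum_subtractf sum_distrib_left)
qed

lemma second_moment_identity:
  fixes a m :: rat
  assumes "m \<noteq> 0"
  shows "(m - 4) / 2 * (\<Sum>k = 0..Suc n. of_nat k ^ 2 * A a k / m ^ k)
      - ((\<Sum>k = 0..Suc n. of_nat k * A a k / m ^ k)
        - 2 * a * (a + 1) * (\<Sum>k = 0..Suc n. A a k / m ^ k)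
        + a * (a + 1) * (\<Sum>k = 0..n. A a k / (m ^ k * (of_nat k + 1))))
    = (2 * a * (a + 1) - of_nat (Suc n) * (2 * of_nat (Suc n) + 1)) * (A a (Suc n) / m ^ Suc n)"
proof -
  define s0 where "s0 = (\<Sum>k = 0..n. A a k / m ^ k)"
  define s1 where "s1 = (\<Sum>k = 0..n. of_nat k * A a k / m ^ k)"
  define s2 where "s2 = (\<Sum>k = 0..n. of_nat k ^ 2 * A a k / m ^ k)"
  define t where "t = (\<Sum>k = 0..n. A a k / (m ^ k * (of_nat k + 1)))"
  define q :: rat where "q = of_nat (Suc n)"
  define x where "x = A a (Suc n) / m ^ Suc n"
  have S0: "(\<Sum>k = 0..Suc n. A a k / m ^ k) = s0 + x"
    and S1: "(\<Sum>k = 0..Suc n. of_nat k * A a k / m ^ k) = s1 + q * x"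
    and S2: "(\<Sum>k = 0..Suc n. of_nat k ^ 2 * A a k / m ^ k) = s2 + q ^ 2 * x"
    unfolding s0_def s1_def s2_def q_def x_def by simp_all
  have "m * (s2 + q ^ 2 * x) = 4 * s2 + 2 * s1 - 4 * a * (a + 1) * s0 + 2 * a * (a + 1) * t"
    using second_moment_recurrence[OF assms, where a = a and n = n]
    unfolding S2 s0_def[symmetric] s1_def[symmetric] s2_def[symmetric] t_def[symmetric] .
  then show ?thesis
    unfolding S0 S1 S2 t_def[symmetric] q_def[symmetric] x_def[symmetric]
    by (simp add: field_simps power2_eq_square)
qed

lemma third_moment_identity:
  fixes a m :: rat
  assumes "m \<noteq> 0"
  shows "(m - 4) / 2 * (\<Sum>k = 0..Suc n. of_nat k ^ 3 * A a k / m ^ k)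
      - (3 * (\<Sum>k = 0..Suc n. of_nat k ^ 2 * A a k / m ^ k)
        - (2 * a * (a + 1) - 1) * (\<Sum>k = 0..Suc n. of_nat k * A a k / m ^ k)
        - a * (a + 1) * (\<Sum>k = 0..Suc n. A a k / m ^ k))
    = (2 * of_nat (Suc n) + 1) * (a * (a + 1) - of_nat (Suc n) * (of_nat (Suc n) + 1))
      * (A a (Suc n) / m ^ Suc n)"
proof -
  define s0 where "s0 = (\<Sum>k = 0..n. A a k / m ^ k)"
  define s1 where "s1 = (\<Sum>k = 0..n. of_nat k * A a k / m ^ k)"
  define s2 where "s2 = (\<Sum>k = 0..n. of_nat k ^ 2 * A a k / m ^ k)"
  define s3 where "s3 = (\<Sum>k = 0..n. of_nat k ^ 3 * A a k / m ^ k)"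
  define q :: rat where "q = of_nat (Suc n)"
  define x where "x = A a (Suc n) / m ^ Suc n"
  have S0: "(\<Sum>k = 0..Suc n. A a k / m ^ k) = s0 + x"
    and S1: "(\<Sum>k = 0..Suc n. of_nat k * A a k / m ^ k) = s1 + q * x"
    and S2: "(\<Sum>k = 0..Suc n. of_nat k ^ 2 * A a k / m ^ k) = s2 + q ^ 2 * x"
    and S3: "(\<Sum>k = 0..Suc n. of_nat k ^ 3 * A a k / m ^ k) = s3 + q ^ 3 * x"
    unfolding s0_def s1_def s2_def s3_def q_def x_def by simp_all
  have "m * (s3 + q ^ 3 * x) = 4 * s3 + 6 * s2 + (2 - 4 * a * (a + 1)) * s1 - 2 * a * (a + 1) * s0"
    using third_moment_recurrence[OF assms, where a = a and n = n]
    unfolding S3 s0_def[symmetric] s1_def[symmetric] s2_def[symmetric] s3_def[symmetric] .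
  then show ?thesis
    unfolding S0 S1 S2 S3 q_def[symmetric] x_def[symmetric]
    by (simp add: field_simps power2_eq_square power3_eq_cube)
qed

lemma second_moment_qcong:
  assumes "prime p" "p_integral p a" "\<not> qcong p 1 a 0" "\<not> qcong p 1 a (- 1)"
    and "p_integral p m" "\<not> qcong p 1 m 0"
  shows "qcong p 3
      ((m - 4) / 2 * (\<Sum>k = 0..p-1. of_nat k ^ 2 * A a k / m ^ k))
      ((\<Sum>k = 0..p-1. of_nat k * A a k / m ^ k)
        - 2 * a * (a + 1) * (\<Sum>k = 0..p-1. A a k / m ^ k)
        + a * (a + 1) * (\<Sum>k = 0..p-2. A a k / (m ^ k * (of_nat k + 1))))"
proof -
  define n where "n = p - 2"
  have n: "p - 1 = Suc n" "p - 2 = n"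
    using prime_ge_2_nat[OF assms(1)] unfolding n_def by auto
  have "m \<noteq> 0"
    using assms(1,6) p_integral_0 unfolding qcong_def by auto
  moreover have "qcong p 3 ((2 * a * (a + 1) - of_nat (Suc n) * (2 * of_nat (Suc n) + 1))
      * (A a (Suc n) / m ^ Suc n)) 0"
    using assms(1,2) A_pred_prime_div_power_qcong_0[OF assms] unfolding n
    by (intro qcong_0_mult_left p_integral_intros)
  ultimately show ?thesis
    unfolding n by (subst qcong_diff_iff[symmetric]) (simp only: second_moment_identity[OF \<open>m \<noteq> 0\<close>])
qed

lemma third_moment_qcong:
  assumes "prime p" "p_integral p a" "\<not> qcong p 1 a 0" "\<not> qcong p 1 a (- 1)"
    and "p_integral p m" "\<not> qcong p 1 m 0"
  shows "qcong p 3
      ((m - 4) / 2 * (\<Sum>k = 0..p-1. of_nat k ^ 3 * A a k / m ^ k))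
      (3 * (\<Sum>k = 0..p-1. of_nat k ^ 2 * A a k / m ^ k)
        - (2 * a * (a + 1) - 1) * (\<Sum>k = 0..p-1. of_nat k * A a k / m ^ k)
        - a * (a + 1) * (\<Sum>k = 0..p-1. A a k / m ^ k))"
proof -
  define n where "n = p - 2"
  have n: "p - 1 = Suc n"
    using prime_ge_2_nat[OF assms(1)] unfolding n_def by auto
  have "m \<noteq> 0"
    using assms(1,6) p_integral_0 unfolding qcong_def by auto
  moreover have "qcong p 3 ((2 * of_nat (Suc n) + 1) * (a * (a + 1) - of_nat (Suc n) * (of_nat (Suc n) + 1))
      * (A a (Suc n) / m ^ Suc n)) 0"
    using assms(1,2) A_pred_prime_div_power_qcong_0[OF assms] unfolding n
    by (intro qcong_0_mult_left p_integral_intros)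
  ultimately show ?thesis
    unfolding n by (subst qcong_diff_iff[symmetric]) (simp only: third_moment_identity[OF \<open>m \<noteq> 0\<close>])
qed

lemma qcong_eliminate_second_moment:
  fixes a m S0 S1 S2 S3 T :: rat
  assumes "prime p" "p_integral p m" "\<not> qcong p 1 m 4"
    and E1: "qcong p r ((m - 4) / 2 * S2) (S1 - 2 * a * (a + 1) * S0 + a * (a + 1) * T)"
    and E2: "qcong p r ((m - 4) / 2 * S3) (3 * S2 - (2 * a * (a + 1) - 1) * S1 - a * (a + 1) * S0)"
  shows "qcong p r S3 (((2 - 4 * a * (a + 1)) * (m - 4) + 12) / (m - 4) ^ 2 * S1
      - 2 * a * (a + 1) * (m + 8) / (m - 4) ^ 2 * S0 + 12 * a * (a + 1) / (m - 4) ^ 2 * T)"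
proof -
  let ?E1 = "(m - 4) / 2 * S2 - (S1 - 2 * a * (a + 1) * S0 + a * (a + 1) * T)"
  let ?E2 = "(m - 4) / 2 * S3 - (3 * S2 - (2 * a * (a + 1) - 1) * S1 - a * (a + 1) * S0)"
  have unit: "\<not> qcong p 1 (m - 4) 0"
    using assms(3) by (simp add: qcong_def)
  then have "m - 4 \<noteq> 0"
    using p_integral_0[OF assms(1)] by (auto simp: qcong_def)
  have "p_integral p (inverse (m - 4))"
    using assms(1,2) unit by (intro p_integral_inverse p_integral_intros)
  moreover have "qcong p r ?E1 0" "qcong p r ?E2 0"
    using E1 E2 by (simp_all only: qcong_diff_iff)
  ultimately have "qcong p r (2 * inverse (m - 4) * ?E2 + 12 * inverse (m - 4) ^ 2 * ?E1) (0 + 0)"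
    using assms(1) by (intro qcong_add qcong_0_mult_left p_integral_intros)
  moreover have "2 * inverse (m - 4) * ?E2 + 12 * inverse (m - 4) ^ 2 * ?E1
      = S3 - (((2 - 4 * a * (a + 1)) * (m - 4) + 12) / (m - 4) ^ 2 * S1
        - 2 * a * (a + 1) * (m + 8) / (m - 4) ^ 2 * S0 + 12 * a * (a + 1) / (m - 4) ^ 2 * T)"
  proof -
    define d where "d = m - 4"
    have "m + 8 = d + 12" "d \<noteq> 0"
      using \<open>m - 4 \<noteq> 0\<close> unfolding d_def by simp_all
    then show ?thesis
      unfolding d_def[symmetric] by (simp add: field_simps power2_eq_square)
  qed
  ultimately show ?thesis
    by (simp add: qcong_diff_iff)
qed

theorem theorem3p1:
  fixes p :: nat and a m :: rat
  assumes "prime p" and "odd p"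
    and "p_integral p a" and "p_integral p m"
    and "\<not> qcong p 1 a 0" and "\<not> qcong p 1 a (-1)" and "\<not> qcong p 1 m 0"
  shows "qcong p 3
      ((m - 4) / 2 * (\<Sum>k = 0..p-1. of_nat k ^ 2 * A a k / m ^ k))
      ((\<Sum>k = 0..p-1. of_nat k * A a k / m ^ k)
        - 2 * a * (a + 1) * (\<Sum>k = 0..p-1. A a k / m ^ k)
        + a * (a + 1) * (\<Sum>k = 0..p-2. A a k / (m ^ k * (of_nat k + 1))))
    \<and> qcong p 3
      ((m - 4) / 2 * (\<Sum>k = 0..p-1. of_nat k ^ 3 * A a k / m ^ k))
      (3 * (\<Sum>k = 0..p-1. of_nat k ^ 2 * A a k / m ^ k)
        - (2 * a * (a + 1) - 1) * (\<Sum>k = 0..p-1. of_nat k * A a k / m ^ k)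
        - a * (a + 1) * (\<Sum>k = 0..p-1. A a k / m ^ k))
    \<and> (\<not> qcong p 1 m 4 \<longrightarrow> qcong p 3
      (\<Sum>k = 0..p-1. of_nat k ^ 3 * A a k / m ^ k)
      (((2 - 4 * a * (a + 1)) * (m - 4) + 12) / (m - 4) ^ 2
          * (\<Sum>k = 0..p-1. of_nat k * A a k / m ^ k)
        - 2 * a * (a + 1) * (m + 8) / (m - 4) ^ 2 * (\<Sum>k = 0..p-1. A a k / m ^ k)
        + 12 * a * (a + 1) / (m - 4) ^ 2
          * (\<Sum>k = 0..p-2. A a k / (m ^ k * (of_nat k + 1)))))"
proof -
  note hyps = assms(1,3,5,6,4,7)
  note second = second_moment_qcong[OF hyps]
    and third = third_moment_qcong[OF hyps]
  show ?thesis
    using second third qcong_eliminate_second_moment[OF assms(1,4) _ second third] by blast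
qed

end
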